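(* Let $G$ be a small category and $X$ a set with a partial category action by $G$, and let $Y = \overline{X}/\simeq$ as defined below. For $g\in{\rm mor}(G)$ and $(h,x)\in\overline{X}$, declare $g\cdot[h,x]$ defined if and only if there is $(h',x')\in\overline{X}$ with $(h,x)\simeq(h',x')$ and $(g,h')\in G^2$, and in that case put $g\cdot[h,x] = [gh',x']$. Then this is a well-defined global category action by $G$ on $Y$.
   Context: Conventions: $G$ is a small category; objects are identified with their identity morphisms, so ${\rm ob}(G)\subseteq{\rm mor}(G)$; $d(g), c(g)$ are domain and codomain, $G^2=\{(g,h)\mid d(g)=c(h)\}$. A partial category action by $G$ on $X$ is a partial function ${\rm mor}(G)\times X\to X$, $(g,x)\mapsto g\cdot x$ where defined, such that: (C1) for every $x$ there is $e\in{\rm ob}(G)$ with $e\cdot x$ defined, and whenever $f\in{\rm ob}(G)$ and $f\cdot x$ is defined, $f\cdot x=x$; (C2) if $g\cdot x$ is defined then $d(g)\cdot x$ is defined; (C3) if $(g,h)\in G^2$ and $h\cdot x$ is defined, then $(gh)\cdot x$ is defined iff $g\cdot(h\cdot x)$ is defined, and then they are equal. It is global if (C4): whenever $d(g)\cdot x$ is defined, $g\cdot x$ is defined. Let $\overline{X} = \{(g,x)\in{\rm mor}(G)\times X\mid d(g)\cdot x\text{ defined}\}$. Define $(g,x)\sim(g',x')$ on $\overline{X}$ if either (i) there is $h\in{\rm mor}(G)$ with $(g',h)\in G^2$, $h\cdot x$ defined, $g=g'h$ and $x'=h\cdot x$; or (ii) $x=x'$, $g,g'\in{\rm ob}(G)$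 and both $g\cdot x$ and $g'\cdot x'$ are defined. Let $\simeq$ be the equivalence relation generated by $\sim$, $Y=\overline{X}/\simeq$, and $[g,x]$ the class of $(g,x)$. *)

theory Defs
  imports Main
begin

text \<open>A small category is given by a set of morphisms Mor, a set of objects
Ob (identified with identity morphisms, Ob \<subseteq> Mor), domain/codomain maps
and a composition cmp g h (= g h, defined when dom g = cod h).\<close>

definition category ::
  "'m set \<Rightarrow> 'm set \<Rightarrow> ('m \<Rightarrow> 'm) \<Rightarrow> ('m \<Rightarrow> 'm) \<Rightarrow> ('m \<Rightarrow> 'm \<Rightarrow> 'm) \<Rightarrow> bool" where
  "category Mor Ob d c cmp \<longleftrightarrow>
     Ob \<subseteq> Mor \<and>
     (\<forall>g\<in>Mor. d g \<in> Ob \<and> c g \<in> Ob) \<and>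
     (\<forall>e\<in>Ob. d e = e \<and> c e = e) \<and>
     (\<forall>g\<in>Mor. \<forall>h\<in>Mor. d g = c h \<longrightarrow>
        cmp g h \<in> Mor \<and> d (cmp g h) = d h \<and> c (cmp g h) = c g) \<and>
     (\<forall>g\<in>Mor. cmp (c g) g = g \<and> cmp g (d g) = g) \<and>
     (\<forall>f\<in>Mor. \<forall>g\<in>Mor. \<forall>h\<in>Mor. d f = c g \<longrightarrow> d g = c h \<longrightarrow>
        cmp (cmp f g) h = cmp f (cmp g h))"

text \<open>A partial category action: act g x = Some y means g\<cdot>x is defined and equals y.
Only values with g \<in> Mor, x \<in> X are relevant.\<close>

definition partial_cat_action ::
  "'m set \<Rightarrow> 'm set \<Rightarrow> ('m \<Rightarrow> 'm) \<Rightarrow> ('m \<Rightarrow> 'm) \<Rightarrow> ('m \<Rightarrow> 'm \<Rightarrow> 'm)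
   \<Rightarrow> 'x set \<Rightarrow> ('m \<Rightarrow> 'x \<Rightarrow> 'x option) \<Rightarrow> bool" where
  "partial_cat_action Mor Ob d c cmp X act \<longleftrightarrow>
     (\<forall>g\<in>Mor. \<forall>x\<in>X. \<forall>y. act g x = Some y \<longrightarrow> y \<in> X) \<and>
     (\<forall>x\<in>X. \<exists>e\<in>Ob. act e x \<noteq> None) \<and>
     (\<forall>x\<in>X. \<forall>f\<in>Ob. act f x \<noteq> None \<longrightarrow> act f x = Some x) \<and>
     (\<forall>g\<in>Mor. \<forall>x\<in>X. act g x \<noteq> None \<longrightarrow> act (d g) x \<noteq> None) \<and>
     (\<forall>g\<in>Mor. \<forall>h\<in>Mor. \<forall>x\<in>X. \<forall>y. d g = c h \<longrightarrow> act h x = Some y \<longrightarrow>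
        ((act (cmp g h) x \<noteq> None \<longleftrightarrow> act g y \<noteq> None) \<and>
         (act (cmp g h) x \<noteq> None \<longrightarrow> act (cmp g h) x = act g y)))"

definition global_cat_action ::
  "'m set \<Rightarrow> 'm set \<Rightarrow> ('m \<Rightarrow> 'm) \<Rightarrow> ('m \<Rightarrow> 'm) \<Rightarrow> ('m \<Rightarrow> 'm \<Rightarrow> 'm)
   \<Rightarrow> 'x set \<Rightarrow> ('m \<Rightarrow> 'x \<Rightarrow> 'x option) \<Rightarrow> bool" where
  "global_cat_action Mor Ob d c cmp X act \<longleftrightarrow>
     partial_cat_action Mor Ob d c cmp X act \<and>
     (\<forall>g\<in>Mor. \<forall>x\<in>X. act (d g) x \<noteq> None \<longrightarrow> act g x \<noteq> None)"

definition Xbar ::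
  "'m set \<Rightarrow> ('m \<Rightarrow> 'm) \<Rightarrow> 'x set \<Rightarrow> ('m \<Rightarrow> 'x \<Rightarrow> 'x option) \<Rightarrow> ('m \<times> 'x) set" where
  "Xbar Mor d X act = {(g, x). g \<in> Mor \<and> x \<in> X \<and> act (d g) x \<noteq> None}"

definition sim_rel ::
  "'m set \<Rightarrow> 'm set \<Rightarrow> ('m \<Rightarrow> 'm) \<Rightarrow> ('m \<Rightarrow> 'm) \<Rightarrow> ('m \<Rightarrow> 'm \<Rightarrow> 'm)
   \<Rightarrow> 'x set \<Rightarrow> ('m \<Rightarrow> 'x \<Rightarrow> 'x option) \<Rightarrow> (('m \<times> 'x) \<times> ('m \<times> 'x)) set" where
  "sim_rel Mor Ob d c cmp X act =
     {((g, x), (g', x')). (g, x) \<in> Xbar Mor d X act \<and> (g', x') \<in> Xbar Mor d X act \<and>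
        ((\<exists>h\<in>Mor. d g' = c h \<and> act h x \<noteq> None \<and> g = cmp g' h \<and> act h x = Some x') \<or>
         (x = x' \<and> g \<in> Ob \<and> g' \<in> Ob \<and> act g x \<noteq> None \<and> act g' x' \<noteq> None))}"

definition simeq_rel ::
  "'m set \<Rightarrow> 'm set \<Rightarrow> ('m \<Rightarrow> 'm) \<Rightarrow> ('m \<Rightarrow> 'm) \<Rightarrow> ('m \<Rightarrow> 'm \<Rightarrow> 'm)
   \<Rightarrow> 'x set \<Rightarrow> ('m \<Rightarrow> 'x \<Rightarrow> 'x option) \<Rightarrow> (('m \<times> 'x) \<times> ('m \<times> 'x)) set" where
  "simeq_rel Mor Ob d c cmp X act =
     (Id_on (Xbar Mor d X act) \<union> sim_rel Mor Ob d c cmp X act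
        \<union> (sim_rel Mor Ob d c cmp X act)\<inverse>)\<^sup>*"

definition Yquot ::
  "'m set \<Rightarrow> 'm set \<Rightarrow> ('m \<Rightarrow> 'm) \<Rightarrow> ('m \<Rightarrow> 'm) \<Rightarrow> ('m \<Rightarrow> 'm \<Rightarrow> 'm)
   \<Rightarrow> 'x set \<Rightarrow> ('m \<Rightarrow> 'x \<Rightarrow> 'x option) \<Rightarrow> ('m \<times> 'x) set set" where
  "Yquot Mor Ob d c cmp X act = Xbar Mor d X act // simeq_rel Mor Ob d c cmp X act"

definition Yact ::
  "'m set \<Rightarrow> 'm set \<Rightarrow> ('m \<Rightarrow> 'm) \<Rightarrow> ('m \<Rightarrow> 'm) \<Rightarrow> ('m \<Rightarrow> 'm \<Rightarrow> 'm)
   \<Rightarrow> 'x set \<Rightarrow> ('m \<Rightarrow> 'x \<Rightarrow> 'x option) \<Rightarrow> 'm \<Rightarrow> ('m \<times> 'x) set \<Rightarrow> ('m \<times> 'x) set option" where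
  "Yact Mor Ob d c cmp X act g y =
     (if g \<in> Mor \<and> y \<in> Yquot Mor Ob d c cmp X act \<and> (\<exists>p\<in>y. d g = c (fst p))
      then (let p = (SOME p. p \<in> y \<and> d g = c (fst p))
            in Some (simeq_rel Mor Ob d c cmp X act `` {(cmp g (fst p), snd p)}))
      else None)"

end

theory Submission
  imports Defs
begin

text \<open>The value of the old action is an invariant of \<open>\<simeq>\<close>: a step \<open>(g'h, x) \<sim> (g', h\<cdot>x)\<close>
  preserves it by (C3), a step of kind (ii) by (C1). If \<open>h\<cdot>x\<close> is defined, say \<open>= w\<close>, then
  \<open>(gh, x) \<sim> (g, w)\<close>, so \<open>[gh, x]\<close> depends only on \<open>g\<close> and \<open>h\<cdot>x\<close>. If it is undefined,
  every step in a chain from \<open>(h, x)\<close> is of kind (i) between undefined pairs; such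
  steps keep the codomain and stay steps after composing with \<open>g\<close> on the left. This
  makes \<open>g\<cdot>[h, x]\<close> well defined; the axioms of a global action then follow from those
  of the category, using a representative \<open>(h, x)\<close> of the class.\<close>

locale small_category =
  fixes Mor Ob :: "'m set" and d c :: "'m \<Rightarrow> 'm" and cmp :: "'m \<Rightarrow> 'm \<Rightarrow> 'm"
  assumes category: "category Mor Ob d c cmp"
begin

lemma ob_in_mor: "e \<in> Ob \<Longrightarrow> e \<in> Mor"
  using category unfolding category_def by blast

lemma dom_in_ob: "g \<in> Mor \<Longrightarrow> d g \<in> Ob"
  using category unfolding category_def by blast

lemma cod_in_ob: "g \<in> Mor \<Longrightarrow> c g \<in> Ob"
  using category unfolding category_def by blast

lemma dom_ob: "e \<in> Ob \<Longrightarrow> d e = e"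
  using category unfolding category_def by blast

lemma comp_in_mor: "g \<in> Mor \<Longrightarrow> h \<in> Mor \<Longrightarrow> d g = c h \<Longrightarrow> cmp g h \<in> Mor"
  using category unfolding category_def by blast

lemma dom_comp: "g \<in> Mor \<Longrightarrow> h \<in> Mor \<Longrightarrow> d g = c h \<Longrightarrow> d (cmp g h) = d h"
  using category unfolding category_def by blast

lemma cod_comp: "g \<in> Mor \<Longrightarrow> h \<in> Mor \<Longrightarrow> d g = c h \<Longrightarrow> c (cmp g h) = c g"
  using category unfolding category_def by blast

lemma comp_cod_left: "g \<in> Mor \<Longrightarrow> cmp (c g) g = g"
  using category unfolding category_def by blast

lemma comp_assoc:
  "f \<in> Mor \<Longrightarrow> g \<in> Mor \<Longrightarrow> h \<in> Mor \<Longrightarrow> d f = c g \<Longrightarrow> d g = c h \<Longrightarrow>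
    cmp (cmp f g) h = cmp f (cmp g h)"
  using category unfolding category_def by blast

end

locale partial_category_action = small_category +
  fixes X :: "'x set" and act :: "'m \<Rightarrow> 'x \<Rightarrow> 'x option"
  assumes partial_action: "partial_cat_action Mor Ob d c cmp X act"
begin

abbreviation "Xb \<equiv> Xbar Mor d X act"
abbreviation "sim \<equiv> sim_rel Mor Ob d c cmp X act"
abbreviation "simeq \<equiv> simeq_rel Mor Ob d c cmp X act"
abbreviation "Y \<equiv> Yquot Mor Ob d c cmp X act"
abbreviation "actY \<equiv> Yact Mor Ob d c cmp X act"

lemma act_closed: "g \<in> Mor \<Longrightarrow> x \<in> X \<Longrightarrow> act g x = Some y \<Longrightarrow> y \<in> X"
  using partial_action unfolding partial_cat_action_def by blast

lemma act_ob: "x \<in> X \<Longrightarrow> f \<in> Ob \<Longrightarrow> act f x \<noteq> None \<Longrightarrow> act f x = Some x"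
  using partial_action unfolding partial_cat_action_def by blast

lemma act_comp:
  assumes "g \<in> Mor" "h \<in> Mor" "x \<in> X" "d g = c h" "act h x = Some y"
  shows "act (cmp g h) x = act g y"
  using partial_action assms unfolding partial_cat_action_def by (metis (no_types, lifting))

lemma mem_Xbar_iff: "(g, x) \<in> Xb \<longleftrightarrow> g \<in> Mor \<and> x \<in> X \<and> act (d g) x \<noteq> None"
  unfolding Xbar_def by auto

lemma sim_XbarD: "(p, q) \<in> sim \<Longrightarrow> p \<in> Xb \<and> q \<in> Xb"
  unfolding sim_rel_def by auto

lemma simeq_rel_eq: "simeq = (sim \<union> sim\<inverse>)\<^sup>*"
  unfolding simeq_rel_def by (rule rtrancl_subset) auto

lemma sim_relI:
  assumes "(cmp g' h, x) \<in> Xb" "(g', x') \<in> Xb" "h \<in> Mor" "d g' = c h" "act h x = Some x'"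
  shows "((cmp g' h, x), (g', x')) \<in> sim"
  using assms unfolding sim_rel_def by auto

lemma sim_in_simeq: "(p, q) \<in> sim \<Longrightarrow> (p, q) \<in> simeq"
  unfolding simeq_rel_eq by auto

lemma simeq_refl: "(p, p) \<in> simeq"
  unfolding simeq_rel_eq by simp

lemma simeq_sym: "(p, q) \<in> simeq \<Longrightarrow> (q, p) \<in> simeq"
  unfolding simeq_rel_eq by (metis sym_Un_converse sym_rtrancl symD)

lemma simeq_trans: "(p, q) \<in> simeq \<Longrightarrow> (q, r) \<in> simeq \<Longrightarrow> (p, r) \<in> simeq"
  unfolding simeq_rel_eq by (rule rtrancl_trans)

lemma simeq_XbarD: "(p, q) \<in> simeq \<Longrightarrow> p \<in> Xb \<Longrightarrow> q \<in> Xb"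
  unfolding simeq_rel_eq by (induction rule: rtrancl_induct) (auto dest: sim_XbarD)

lemma sim_act_eq:
  assumes s: "((g, x), (g', x')) \<in> sim"
  shows "act g x = act g' x'"
proof -
  have g': "g' \<in> Mor" "x \<in> X" "g \<in> Mor"
    using sim_XbarD[OF s] by (auto simp: mem_Xbar_iff)
  from s consider
      h where "h \<in> Mor" "d g' = c h" "g = cmp g' h" "act h x = Some x'"
    | "x = x'" "g \<in> Ob" "g' \<in> Ob" "act g x \<noteq> None" "act g' x' \<noteq> None"
    unfolding sim_rel_def by auto
  then show ?thesis
  proof cases
    case (1 h)
    then show ?thesis using act_comp g' by simp
  next
    case 2
    then show ?thesis using act_ob[of x g] act_ob[of x' g'] g' by simp
  qed
qed

lemma simeq_act_eq: "(p, q) \<in> simeq \<Longrightarrow> act (fst p) (snd p) = act (fst q) (snd q)"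
  unfolding simeq_rel_eq
  by (induction rule: rtrancl_induct) (auto dest: sim_act_eq)

text \<open>Undefinedness of \<open>g\<cdot>x\<close> excludes steps of kind (ii).\<close>

lemma sim_undefined_cod_eq:
  assumes s: "((g, x), (g', x')) \<in> sim" and undef: "act g x = None"
  shows "c g' = c g"
proof -
  from s undef obtain h where "h \<in> Mor" "d g' = c h" "g = cmp g' h"
    unfolding sim_rel_def by auto
  moreover have "g' \<in> Mor" using sim_XbarD[OF s] by (auto simp: mem_Xbar_iff)
  ultimately show ?thesis using cod_comp by simp
qed

lemma sim_undefined_comp_left:
  assumes s: "((g, x), (g', x')) \<in> sim" and undef: "act g x = None"
    and G: "G \<in> Mor" "d G = c g"
  shows "((cmp G g, x), (cmp G g', x')) \<in> sim"
proof -
  from s undef obtain h where h: "h \<in> Mor" "d g' = c h" "g = cmp g' h" "act h x = Some x'"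
    unfolding sim_rel_def by auto
  have g': "g' \<in> Mor" "x \<in> X" "x' \<in> X" "act (d g) x \<noteq> None" "act (d g') x' \<noteq> None"
    using sim_XbarD[OF s] by (auto simp: mem_Xbar_iff)
  have cod: "c g' = c g" using sim_undefined_cod_eq[OF s undef] .
  have g: "g \<in> Mor" using g' h comp_in_mor by simp
  have "(cmp G g, x) \<in> Xb" "(cmp G g', x') \<in> Xb"
    using G g g' cod comp_in_mor dom_comp by (simp_all add: mem_Xbar_iff)
  moreover have "d (cmp G g') = c h" using G g' cod h dom_comp by simp
  moreover have "cmp G g = cmp (cmp G g') h"
    using comp_assoc[OF G(1) g'(1) h(1)] G cod h by simp
  ultimately show ?thesis
    using sim_relI h(1,4) by metis
qed

lemma simeq_undefined_comp_left:
  assumes "(p, q) \<in> simeq" "p \<in> Xb" "act (fst p) (snd p) = None"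
    and G: "G \<in> Mor" "d G = c (fst p)"
  shows "c (fst q) = c (fst p) \<and> ((cmp G (fst p), snd p), (cmp G (fst q), snd q)) \<in> simeq"
  using assms(1) unfolding simeq_rel_eq
proof (induction rule: rtrancl_induct)
  case base
  show ?case by simp
next
  case (step q r)
  from step.hyps(1) have "(p, q) \<in> simeq" unfolding simeq_rel_eq .
  then have undef: "act (fst q) (snd q) = None"
    using simeq_act_eq assms(3) by simp
  from step.IH have cod: "c (fst q) = c (fst p)"
    and IH: "((cmp G (fst p), snd p), (cmp G (fst q), snd q)) \<in> (sim \<union> sim\<inverse>)\<^sup>*"
    unfolding simeq_rel_eq by auto
  obtain g x g' x' where qr: "q = (g, x)" "r = (g', x')" by fastforce
  from step.hyps(2) have "c g' = c g \<and> ((cmp G g, x), (cmp G g', x')) \<in> sim \<union> sim\<inverse>"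
  proof
    assume "(q, r) \<in> sim"
    then show ?thesis
      using sim_undefined_cod_eq sim_undefined_comp_left undef G cod qr by simp
  next
    assume "(q, r) \<in> sim\<inverse>"
    then have s: "((g', x'), (g, x)) \<in> sim" using qr by simp
    moreover have undef': "act g' x' = None" using sim_act_eq[OF s] undef qr by simp
    ultimately have "c g = c g'" by (rule sim_undefined_cod_eq)
    moreover have "((cmp G g', x'), (cmp G g, x)) \<in> sim"
      using sim_undefined_comp_left[OF s undef'] G cod qr calculation by simp
    ultimately show ?thesis by simp
  qed
  with IH cod qr show ?case by (auto intro: rtrancl_into_rtrancl)
qed

lemma sim_defined_comp_left:
  assumes hx: "(h, x) \<in> Xb" and w: "act h x = Some w" and G: "G \<in> Mor" "d G = c h"
  shows "((cmp G h, x), (G, w)) \<in> sim"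
proof -
  have h: "h \<in> Mor" "x \<in> X" using hx by (simp_all add: mem_Xbar_iff)
  have "c h \<in> Mor" "d (c h) = c h" using cod_in_ob ob_in_mor dom_ob h by auto
  then have "act (cmp (c h) h) x = act (c h) w" using act_comp h w by blast
  then have "act (c h) w = Some w" using comp_cod_left h w by simp
  moreover have "w \<in> X" using act_closed h w by blast
  ultimately have "(G, w) \<in> Xb" using G by (simp add: mem_Xbar_iff)
  moreover have "(cmp G h, x) \<in> Xb" using hx G h comp_in_mor dom_comp by (simp add: mem_Xbar_iff)
  ultimately show ?thesis using sim_relI h G w by blast
qed

lemma simeq_comp_left:
  assumes pq: "(p, q) \<in> simeq" and p: "p \<in> Xb"
    and G: "G \<in> Mor" "d G = c (fst p)" "d G = c (fst q)"
  shows "((cmp G (fst p), snd p), (cmp G (fst q), snd q)) \<in> simeq"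
proof (cases "act (fst p) (snd p)")
  case None
  then show ?thesis using simeq_undefined_comp_left assms by blast
next
  case (Some w)
  have "q \<in> Xb" "act (fst q) (snd q) = Some w"
    using simeq_XbarD simeq_act_eq pq p Some by auto
  then have "((cmp G (fst q), snd q), (G, w)) \<in> sim"
    using sim_defined_comp_left[of "fst q" "snd q"] G by simp
  moreover have "((cmp G (fst p), snd p), (G, w)) \<in> sim"
    using sim_defined_comp_left[of "fst p" "snd p"] p G Some by simp
  ultimately show ?thesis
    using sim_in_simeq simeq_sym simeq_trans by blast
qed

lemma comp_left_in_Xbar:
  assumes "p \<in> Xb" "G \<in> Mor" "d G = c (fst p)"
  shows "(cmp G (fst p), snd p) \<in> Xb"
  using assms comp_in_mor dom_comp by (cases p) (auto simp: mem_Xbar_iff)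

lemma Yquot_memberD: "y \<in> Y \<Longrightarrow> p \<in> y \<Longrightarrow> p \<in> Xb \<and> y = simeq `` {p}"
  unfolding Yquot_def quotient_def
  using simeq_XbarD simeq_sym simeq_trans by blast

lemma Yquot_nonempty: "y \<in> Y \<Longrightarrow> \<exists>p. p \<in> y"
  unfolding Yquot_def quotient_def using simeq_refl by blast

lemma class_in_Yquot: "p \<in> Xb \<Longrightarrow> simeq `` {p} \<in> Y"
  unfolding Yquot_def by (rule quotientI)

lemma Yact_defined_iff: "actY G y \<noteq> None \<longleftrightarrow> G \<in> Mor \<and> y \<in> Y \<and> (\<exists>p\<in>y. d G = c (fst p))"
  unfolding Yact_def by (auto simp: Let_def)

lemma Yact_eq:
  assumes G: "G \<in> Mor" and y: "y \<in> Y" and p: "p \<in> y" "d G = c (fst p)"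
  shows "actY G y = Some (simeq `` {(cmp G (fst p), snd p)})"
proof -
  define p0 where "p0 = (SOME p. p \<in> y \<and> d G = c (fst p))"
  have p0: "p0 \<in> y" "d G = c (fst p0)"
    unfolding p0_def using someI[of "\<lambda>p. p \<in> y \<and> d G = c (fst p)"] p by auto
  then have "(p0, p) \<in> simeq" "p0 \<in> Xb" using Yquot_memberD y p by blast+
  then have "simeq `` {(cmp G (fst p0), snd p0)} = simeq `` {(cmp G (fst p), snd p)}"
    using simeq_comp_left[of p0 p G] simeq_comp_left[of p p0 G] simeq_sym simeq_trans G p p0
    by blast
  moreover have "actY G y = Some (simeq `` {(cmp G (fst p0), snd p0)})"
    unfolding Yact_def Let_def p0_def using G y p by auto
  ultimately show ?thesis by simp
qed

lemma Yact_well_defined: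
  assumes "g \<in> Mor" "y \<in> Y" "p \<in> y" "q \<in> y" "d g = c (fst p)" "d g = c (fst q)"
  shows "(cmp g (fst p), snd p) \<in> Xb \<and>
    simeq `` {(cmp g (fst p), snd p)} = simeq `` {(cmp g (fst q), snd q)}"
  using Yact_eq[of g y p] Yact_eq[of g y q] comp_left_in_Xbar Yquot_memberD assms by auto

lemma Yact_comp:
  assumes g: "g \<in> Mor" and h: "h \<in> Mor" and y: "y \<in> Y" and gh: "d g = c h"
    and z: "actY h y = Some z"
  shows "actY (cmp g h) y = actY g z"
proof -
  from z obtain p where p: "p \<in> y" "d h = c (fst p)" using Yact_defined_iff[of h y] by auto
  have "p \<in> Xb" using Yquot_memberD y p by blast
  then have pm: "fst p \<in> Mor" by (cases p) (auto simp: mem_Xbar_iff)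
  define hp where "hp = (cmp h (fst p), snd p)"
  have hp: "hp \<in> Xb" "z = simeq `` {hp}"
    unfolding hp_def using Yact_eq h y p z comp_left_in_Xbar \<open>p \<in> Xb\<close> by auto
  then have "z \<in> Y" "hp \<in> z" using class_in_Yquot simeq_refl by auto
  moreover have "d g = c (fst hp)" unfolding hp_def using cod_comp h pm p gh by simp
  ultimately have "actY g z = Some (simeq `` {(cmp g (cmp h (fst p)), snd p)})"
    using Yact_eq[OF g] unfolding hp_def by auto
  moreover have "actY (cmp g h) y = Some (simeq `` {(cmp (cmp g h) (fst p), snd p)})"
    using Yact_eq[of "cmp g h" y p] comp_in_mor dom_comp g h gh y p by simp
  ultimately show ?thesis using comp_assoc g h pm gh p by simp
qed

lemma Yact_global: "global_cat_action Mor Ob d c cmp Y actY"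
  unfolding global_cat_action_def partial_cat_action_def
proof (intro conjI ballI allI impI)
  fix g y z assume "g \<in> Mor" "y \<in> Y" "actY g y = Some z"
  then show "z \<in> Y"
    using Yact_defined_iff[of g y] Yact_eq Yquot_memberD comp_left_in_Xbar class_in_Yquot
    by (metis option.distinct(1) option.inject)
next
  fix y assume y: "y \<in> Y"
  then obtain p where p: "p \<in> y" using Yquot_nonempty by blast
  then have "fst p \<in> Mor" using Yquot_memberD y by (cases p) (auto simp: mem_Xbar_iff)
  then show "\<exists>e\<in>Ob. actY e y \<noteq> None"
    using Yact_defined_iff[of "c (fst p)" y] y p cod_in_ob dom_ob ob_in_mor by auto
next
  fix y f assume y: "y \<in> Y" and f: "f \<in> Ob" and "actY f y \<noteq> None"
  then obtain p where p: "p \<in> y" "d f = c (fst p)" using Yact_defined_iff[of f y] by blast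
  then have "fst p \<in> Mor" "y = simeq `` {p}"
    using Yquot_memberD y by (cases p, auto simp: mem_Xbar_iff)+
  moreover have "cmp f (fst p) = fst p" using p f dom_ob comp_cod_left calculation by simp
  ultimately show "actY f y = Some y" using Yact_eq[OF ob_in_mor[OF f] y p] by simp
next
  fix g y assume "g \<in> Mor" "y \<in> Y" "actY g y \<noteq> None"
  then show "actY (d g) y \<noteq> None"
    using Yact_defined_iff dom_in_ob dom_ob ob_in_mor by metis
next
  fix g y assume "g \<in> Mor" "y \<in> Y" "actY (d g) y \<noteq> None"
  then show "actY g y \<noteq> None"
    using Yact_defined_iff dom_in_ob dom_ob by metis
next
  fix g h y z assume "g \<in> Mor" "h \<in> Mor" "y \<in> Y" "d g = c h" "actY h y = Some z"
  then show "(actY (cmp g h) y \<noteq> None) = (actY g z \<noteq> None)"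
    using Yact_comp by simp
next
  fix g h y z assume "g \<in> Mor" "h \<in> Mor" "y \<in> Y" "d g = c h" "actY h y = Some z"
  then show "actY (cmp g h) y = actY g z"
    using Yact_comp by simp
qed

end

theorem proposition3p11:
  fixes Mor Ob :: "'m set" and d c :: "'m \<Rightarrow> 'm" and cmp :: "'m \<Rightarrow> 'm \<Rightarrow> 'm"
    and X :: "'x set" and act :: "'m \<Rightarrow> 'x \<Rightarrow> 'x option"
  assumes "category Mor Ob d c cmp"
    and "partial_cat_action Mor Ob d c cmp X act"
  shows "(\<forall>g\<in>Mor. \<forall>y\<in>Yquot Mor Ob d c cmp X act. \<forall>p\<in>y. \<forall>q\<in>y.
            d g = c (fst p) \<longrightarrow> d g = c (fst q) \<longrightarrow>
            (cmp g (fst p), snd p) \<in> Xbar Mor d X act \<and>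
            simeq_rel Mor Ob d c cmp X act `` {(cmp g (fst p), snd p)}
              = simeq_rel Mor Ob d c cmp X act `` {(cmp g (fst q), snd q)})
         \<and> global_cat_action Mor Ob d c cmp (Yquot Mor Ob d c cmp X act)
              (Yact Mor Ob d c cmp X act)"
proof -
  interpret partial_category_action Mor Ob d c cmp X act
    using assms by unfold_locales
  show ?thesis using Yact_well_defined Yact_global by blast
qed

end
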